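(* Let $F=P_{\ell_1}\cup\cdots\cup P_{\ell_k}$ be a linear forest with $k\ge2$, $\ell_1\ge\cdots\ge\ell_k\ge2$ and $\ell_i\ne 3$ for all $i$. If the graph $P_{2\delta_F+1}\cup P_{\delta_F}$ is $F$-free, then either $F\in\{5P_5,\ 2P_\ell,\ P_{\ell+1}\cup P_\ell\}$ for some integer $\ell$, or $F\in\{P_{\ell+2}\cup P_\ell,\ 2P_\ell\cup P_2\}$ for some odd integer $\ell$.
   Context: $P_m$ is the path on $m$ vertices; $G\cup H$ is disjoint union and $tG$ is $t$ disjoint copies of $G$. $\delta_F=\sum_{i=1}^k\lfloor \ell_i/2\rfloor-1$. A graph is $F$-free if it has no subgraph isomorphic to $F$. *)

theory Defs
  imports Main
begin

text \<open>Simple graphs are given by a vertex set and a symmetric, irreflexive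
adjacency relation.\<close>

definition subgraph_of ::
  "'a set \<Rightarrow> ('a \<Rightarrow> 'a \<Rightarrow> bool) \<Rightarrow> 'b set \<Rightarrow> ('b \<Rightarrow> 'b \<Rightarrow> bool) \<Rightarrow> bool" where
  "subgraph_of VF EF VG EG \<longleftrightarrow>
     (\<exists>f. inj_on f VF \<and> f ` VF \<subseteq> VG \<and>
          (\<forall>u\<in>VF. \<forall>v\<in>VF. EF u v \<longrightarrow> EG (f u) (f v)))"

text \<open>The linear forest  P_{ls!0} \<union> ... \<union> P_{ls!(k-1)}: vertex (i,j) is the
j-th vertex of the i-th path (which has ls!i vertices).\<close>

definition lf_verts :: "nat list \<Rightarrow> (nat \<times> nat) set" where
  "lf_verts ls = {(i, j). i < length ls \<and> j < ls ! i}"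

definition lf_edge :: "nat list \<Rightarrow> nat \<times> nat \<Rightarrow> nat \<times> nat \<Rightarrow> bool" where
  "lf_edge ls u v \<longleftrightarrow> u \<in> lf_verts ls \<and> v \<in> lf_verts ls \<and> fst u = fst v \<and>
     (snd v = snd u + 1 \<or> snd u = snd v + 1)"

definition lf_free :: "nat list \<Rightarrow> nat list \<Rightarrow> bool" where
  "lf_free ms ls \<longleftrightarrow> \<not> subgraph_of (lf_verts ls) (lf_edge ls) (lf_verts ms) (lf_edge ms)"

definition delta_F :: "nat list \<Rightarrow> nat" where
  "delta_F ls = (\<Sum>l\<leftarrow>ls. l div 2) - 1"

end

theory Submission
  imports Defs
begin

text \<open>Let s be the sum of the halves l div 2 of the path orders and o the number
of odd paths, so that F has 2s + o vertices and delta_F = s - 1. Laying paths end to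
end shows that F embeds into P_(2s-1) \<union> P_(s-1) as soon as some set of its paths
has total order between o + 1 and s - 1. If the second longest path P_b satisfies
b + o < s, such a set is found greedily among the paths other than the longest one.
Otherwise P_b alone has the right order, unless b is so large compared with s that
at most five paths are present; a finite case analysis of these leaves exactly the
listed forests.\<close>

definition half_sum :: "nat list \<Rightarrow> nat" where
  "half_sum ls = (\<Sum>l\<leftarrow>ls. l div 2)"

definition odd_count :: "nat list \<Rightarrow> nat" where
  "odd_count ls = (\<Sum>l\<leftarrow>ls. l mod 2)"

lemma delta_F_eq_half_sum: "delta_F ls = half_sum ls - 1"
  unfolding delta_F_def half_sum_def ..

lemma sum_list_eq_half_sum_odd_count: "sum_list ls = 2 * half_sum ls + odd_count ls"
  unfolding half_sum_def odd_count_def by (induction ls) auto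

lemma sum_nth_eq_sum_list: "(\<Sum>i<length ls. ls ! i) = sum_list ls"
  by (simp add: sum_list_sum_nth atLeast0LessThan)

definition path_offset :: "nat list \<Rightarrow> nat set \<Rightarrow> nat \<Rightarrow> nat" where
  "path_offset ls A i = (\<Sum>x\<in>{x\<in>A. x < i}. ls ! x)"

lemma path_offset_add_le:
  assumes "finite A" "i \<in> A" "{x\<in>A. x < i} \<subseteq> K" "i \<in> K" "K \<subseteq> A"
  shows "path_offset ls A i + ls ! i \<le> (\<Sum>x\<in>K. ls ! x)"
proof -
  have "path_offset ls A i + ls ! i = (\<Sum>x\<in>insert i {x\<in>A. x < i}. ls ! x)"
    unfolding path_offset_def using assms(1) by simp
  also have "\<dots> \<le> (\<Sum>x\<in>K. ls ! x)"
    using assms by (intro sum_mono2) (auto intro: finite_subset)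
  finally show ?thesis .
qed

lemma path_offset_inj:
  assumes "finite A" "i \<in> A" "i' \<in> A" "j < ls ! i" "j' < ls ! i'"
    and "path_offset ls A i + j = path_offset ls A i' + j'"
  shows "i = i'"
proof -
  have less: "path_offset ls A p + q < path_offset ls A p' + q'"
    if "p \<in> A" "p' \<in> A" "p < p'" "q < ls ! p" for p p' q q'
  proof -
    have "path_offset ls A p + ls ! p \<le> (\<Sum>x\<in>{x\<in>A. x < p'}. ls ! x)"
      using that assms(1) by (intro path_offset_add_le) auto
    then show ?thesis using that(4) unfolding path_offset_def by linarith
  qed
  show ?thesis
    using less[of i i' j j'] less[of i' i j' j] assms by (cases i i' rule: linorder_cases) auto
qed

text \<open>The paths indexed by I are laid end to end along the path of order m1, the
remaining ones along the path of order m0.\<close>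

lemma subgraph_of_lf_two_paths:
  assumes I: "I \<subseteq> {..<length ls}"
    and fits1: "(\<Sum>i\<in>I. ls ! i) \<le> m1"
    and fits0: "(\<Sum>i\<in>{..<length ls} - I. ls ! i) \<le> m0"
  shows "subgraph_of (lf_verts ls) (lf_edge ls) (lf_verts [m0, m1]) (lf_edge [m0, m1])"
proof -
  define J where "J = {..<length ls} - I"
  define f where "f = (\<lambda>(i, j). if i \<in> I then (1::nat, path_offset ls I i + j)
                                  else (0, path_offset ls J i + j))"
  have fin: "finite I" "finite J"
    using I finite_subset unfolding J_def by auto
  have pos1: "path_offset ls I i + j < m1" if "i \<in> I" "j < ls ! i" for i j
    using path_offset_add_le[OF fin(1) that(1), of I ls] fits1 that by auto
  have pos0: "path_offset ls J i + j < m0" if "i \<in> J" "j < ls ! i" for i j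
    using path_offset_add_le[OF fin(2) that(1), of J ls] fits0 that
    unfolding J_def[symmetric] by auto
  have img: "f ` lf_verts ls \<subseteq> lf_verts [m0, m1]"
  proof (rule image_subsetI)
    fix u assume "u \<in> lf_verts ls"
    then obtain i j where "u = (i, j)" "i < length ls" "j < ls ! i"
      unfolding lf_verts_def by auto
    then show "f u \<in> lf_verts [m0, m1]"
      using pos0[of i j] pos1[of i j] unfolding f_def lf_verts_def J_def by auto
  qed
  have "inj_on f (lf_verts ls)"
  proof (rule inj_onI)
    fix u v assume "u \<in> lf_verts ls" "v \<in> lf_verts ls" "f u = f v"
    moreover obtain i j i' j' where "u = (i, j)" "v = (i', j')" by fastforce
    ultimately show "u = v"
      using path_offset_inj[OF fin(1), of i i' j ls j']
        path_offset_inj[OF fin(2), of i i' j ls j']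
      unfolding f_def lf_verts_def J_def by (auto split: if_splits)
  qed
  moreover have "lf_edge [m0, m1] (f u) (f v)" if "lf_edge ls u v" for u v
  proof -
    obtain i j i' j' where "u = (i, j)" "v = (i', j')" by fastforce
    moreover have "u \<in> lf_verts ls" "v \<in> lf_verts ls" using that unfolding lf_edge_def by auto
    ultimately show ?thesis using that img unfolding lf_edge_def f_def by auto
  qed
  ultimately show ?thesis unfolding subgraph_of_def using img by blast
qed

lemma not_lf_free_of_balanced_split:
  assumes "I \<subseteq> {..<length ls}"
    and "odd_count ls + 1 \<le> (\<Sum>i\<in>I. ls ! i)" "(\<Sum>i\<in>I. ls ! i) \<le> delta_F ls"
  shows "\<not> lf_free [2 * delta_F ls + 1, delta_F ls] ls"
proof -
  have "(\<Sum>i\<in>{..<length ls} - I. ls ! i) = sum_list ls - (\<Sum>i\<in>I. ls ! i)"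
    using assms(1) by (subst sum_diff_nat) (auto intro: finite_subset simp: sum_nth_eq_sum_list)
  also have "\<dots> \<le> 2 * delta_F ls + 1"
    using assms(2,3) unfolding sum_list_eq_half_sum_odd_count delta_F_eq_half_sum by linarith
  finally show ?thesis
    using subgraph_of_lf_two_paths[OF assms(1,3)] unfolding lf_free_def by blast
qed

lemma subset_sum_between:
  fixes w :: "'a \<Rightarrow> nat"
  assumes "finite A" "\<forall>x\<in>A. w x + L \<le> U + 1" "L \<le> sum w A"
  shows "\<exists>T\<subseteq>A. L \<le> sum w T \<and> sum w T \<le> U"
  using assms
proof (induction A rule: finite_induct)
  case (insert x A)
  show ?case
  proof (cases "L \<le> sum w A")
    case True
    then show ?thesis using insert by blast
  next
    case False
    then show ?thesis using insert by (intro exI[of _ "insert x A"]) auto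
  qed
qed simp

lemma mod_two_add_one_le_div_two:
  fixes l :: nat
  assumes "2 \<le> l" "l \<noteq> 3"
  shows "l mod 2 + 1 \<le> l div 2"
proof -
  have "l = 2 \<or> 4 \<le> l" using assms by linarith
  then show ?thesis by (auto dest: div_le_mono[where k = 2])
qed

lemma odd_count_add_length_le_half_sum:
  assumes "\<forall>l\<in>set ls. 2 \<le> l \<and> l \<noteq> 3"
  shows "odd_count ls + length ls \<le> half_sum ls"
  using assms mod_two_add_one_le_div_two
  unfolding odd_count_def half_sum_def by (induction ls) fastforce+

lemma balanced_split_from_tail:
  assumes ls: "ls = a # b # rest" and sorted: "sorted_wrt (\<ge>) ls"
    and paths: "\<forall>l\<in>set ls. 2 \<le> l \<and> l \<noteq> 3"
    and short: "b + odd_count ls < half_sum ls"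
  shows "\<exists>I\<subseteq>{..<length ls}. odd_count ls + 1 \<le> (\<Sum>i\<in>I. ls ! i)
                             \<and> (\<Sum>i\<in>I. ls ! i) \<le> delta_F ls"
proof -
  define A where "A = {1..<length ls}"
  have le_b: "ls ! i \<le> b" if "i \<in> A" for i
  proof (cases "i = 1")
    case False
    then show ?thesis
      using that sorted_wrt_nth_less[OF sorted, of 1 i] ls unfolding A_def by auto
  qed (use ls in simp)
  have "{..<length ls} = insert 0 A" "0 \<notin> A"
    using ls unfolding A_def by auto
  then have "sum_list ls = a + (\<Sum>i\<in>A. ls ! i)"
    using ls unfolding sum_nth_eq_sum_list[symmetric] A_def by simp
  then have tail: "(\<Sum>i\<in>A. ls ! i) = sum_list (b # rest)" using ls by simp
  have "odd_count (b # rest) + 1 \<le> half_sum (b # rest)"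
    using odd_count_add_length_le_half_sum[of "b # rest"] paths ls by simp
  then have "odd_count ls + 1 \<le> (\<Sum>i\<in>A. ls ! i)"
    unfolding tail sum_list_eq_half_sum_odd_count using ls
    by (simp add: odd_count_def)
  moreover have "\<forall>i\<in>A. ls ! i + (odd_count ls + 1) \<le> delta_F ls + 1"
    using le_b short unfolding delta_F_eq_half_sum by fastforce
  ultimately have "\<exists>I\<subseteq>A. odd_count ls + 1 \<le> (\<Sum>i\<in>I. ls ! i)
                           \<and> (\<Sum>i\<in>I. ls ! i) \<le> delta_F ls"
    by (intro subset_sum_between) (simp_all add: A_def)
  moreover have "A \<subseteq> {..<length ls}"
    unfolding A_def by auto
  ultimately show ?thesis
    by (meson order_trans)
qed

abbreviation exceptional_forest :: "nat list \<Rightarrow> bool" where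
  "exceptional_forest ls \<equiv> ls = replicate 5 5
      \<or> (\<exists>l. ls = [l, l] \<or> ls = [l + 1, l])
      \<or> (\<exists>l. odd l \<and> (ls = [l + 2, l] \<or> ls = [l, l, 2]))"

text \<open>By tight, the excesses l div 2 - l mod 2 \<ge> 1 of all paths add up to at most b.
The two longest paths alone have excess at least b - 2 (b mod 2) - a mod 2, which
leaves room for at most three further paths.\<close>

lemma exceptional_forest_of_tight:
  assumes sorted: "sorted_wrt (\<ge>) (a # b # rest)"
    and paths: "\<forall>l\<in>set (a # b # rest). 2 \<le> l \<and> l \<noteq> 3"
    and tight: "half_sum (a # b # rest) \<le> b + odd_count (a # b # rest)"
    and no_split: "b \<le> odd_count (a # b # rest) \<or> half_sum (a # b # rest) \<le> b"
  shows "exceptional_forest (a # b # rest)"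
proof -
  define h p where "h l = l div 2" and "p l = l mod 2" for l :: nat
  have decomp: "2 * h l + p l = l" for l
    unfolding h_def p_def by simp
  have hp: "\<forall>l\<in>set (a # b # rest). p l \<le> 1 \<and> p l + 1 \<le> h l"
    using paths mod_two_add_one_le_div_two unfolding h_def p_def by auto
  have sorted_hp: "\<forall>l\<in>set rest. 2 * h l + p l \<le> 2 * h b + p b"
    "2 * h b + p b \<le> 2 * h a + p a" "h b \<le> h a"
    using sorted unfolding decomp by (auto simp: h_def intro: div_le_mono)
  have sums: "half_sum xs = (\<Sum>l\<leftarrow>xs. h l)" "odd_count xs = (\<Sum>l\<leftarrow>xs. p l)" for xs
    unfolding half_sum_def odd_count_def h_def p_def by simp_all
  have tight': "h a + h b + (\<Sum>l\<leftarrow>rest. h l)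
      \<le> 2 * h b + p b + p a + p b + (\<Sum>l\<leftarrow>rest. p l)"
    using tight unfolding sums by (simp add: decomp)
  have no_split': "2 * h b + p b \<le> p a + p b + (\<Sum>l\<leftarrow>rest. p l)
      \<or> h a + h b + (\<Sum>l\<leftarrow>rest. h l) \<le> 2 * h b + p b"
    using no_split unfolding sums by (simp add: decomp add.assoc)
  have "(\<Sum>l\<leftarrow>rest. p l) + length rest \<le> (\<Sum>l\<leftarrow>rest. h l)"
    using odd_count_add_length_le_half_sum[of rest] paths unfolding sums by simp
  then have "length rest \<le> 3"
    using tight' hp sorted_hp by simp
  then consider "rest = []" | x where "rest = [x]" | x y where "rest = [x, y]"
    | x y z where "rest = [x, y, z]"
    by (auto simp: le_Suc_eq length_Suc_conv numeral_eq_Suc)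
  then show ?thesis
  proof cases
    case 1
    then have "h a \<le> h b + p b"
      using tight' no_split' hp by simp
    then have "a = b \<or> a = b + 1 \<or> (odd b \<and> a = b + 2)"
      using sorted_hp(2) unfolding decomp h_def p_def by presburger
    then show ?thesis using 1 by auto
  next
    case (2 x)
    then have "h a = h b \<and> p a = 1 \<and> p b = 1 \<and> h x = 1 \<and> p x = 0"
      using tight' no_split' hp sorted_hp by simp
    then have "odd b \<and> a = b \<and> x = 2"
      using decomp[of a] decomp[of b] decomp[of x] unfolding p_def by presburger
    then show ?thesis using 2 by auto
  next
    case (3 x y)
    then show ?thesis
      using tight' no_split' hp sorted_hp by simp
  next
    case (4 x y z)
    then have "h a = 2 \<and> h b = 2 \<and> h x = 2 \<and> h y = 2 \<and> h z = 2
        \<and> p a = 1 \<and> p b = 1 \<and> p x = 1 \<and> p y = 1 \<and> p z = 1"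
      using tight' no_split' hp sorted_hp(3) by simp
    then have "a = 5 \<and> b = 5 \<and> x = 5 \<and> y = 5 \<and> z = 5"
      using decomp[of a] decomp[of b] decomp[of x] decomp[of y] decomp[of z] by simp
    then show ?thesis using 4 by (simp add: numeral_eq_Suc)
  qed
qed

lemma balanced_split_exists:
  assumes "length ls \<ge> 2" "sorted_wrt (\<ge>) ls" "\<forall>l\<in>set ls. 2 \<le> l \<and> l \<noteq> 3"
    and "\<not> exceptional_forest ls"
  shows "\<exists>I\<subseteq>{..<length ls}. odd_count ls + 1 \<le> (\<Sum>i\<in>I. ls ! i)
                             \<and> (\<Sum>i\<in>I. ls ! i) \<le> delta_F ls"
proof -
  obtain a b rest where ls: "ls = a # b # rest"
    using assms(1) by (cases ls; cases "tl ls") auto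
  show ?thesis
  proof (cases "b + odd_count ls < half_sum ls")
    case True
    then show ?thesis using balanced_split_from_tail[OF ls assms(2,3)] by blast
  next
    case False
    have "odd_count ls + 1 \<le> b \<and> b \<le> delta_F ls"
    proof (rule ccontr)
      assume "\<not> (odd_count ls + 1 \<le> b \<and> b \<le> delta_F ls)"
      then have "b \<le> odd_count ls \<or> half_sum ls \<le> b"
        unfolding delta_F_eq_half_sum by linarith
      then show False
        using exceptional_forest_of_tight[of a b rest] False assms(2-4) ls by auto
    qed
    then show ?thesis using ls by (intro exI[of _ "{1}"]) auto
  qed
qed

theorem mainTheorem4:
  fixes ls :: "nat list"
  assumes "length ls \<ge> 2"
    and "sorted_wrt (\<ge>) ls"
    and "\<forall>l\<in>set ls. l \<ge> 2"
    and "\<forall>l\<in>set ls. l \<noteq> 3"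
    and "lf_free [2 * delta_F ls + 1, delta_F ls] ls"
  shows "ls = replicate 5 5
      \<or> (\<exists>l. ls = [l, l] \<or> ls = [l + 1, l])
      \<or> (\<exists>l. odd l \<and> (ls = [l + 2, l] \<or> ls = [l, l, 2]))"
proof (rule ccontr)
  assume "\<not> ?thesis"
  then obtain I where "I \<subseteq> {..<length ls}"
    "odd_count ls + 1 \<le> (\<Sum>i\<in>I. ls ! i)" "(\<Sum>i\<in>I. ls ! i) \<le> delta_F ls"
    using balanced_split_exists[of ls] assms(1-4) by auto
  then show False
    using not_lf_free_of_balanced_split assms(5) by blast
qed

end
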